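(* For any partition $\lambda=(\lambda_1,\dots,\lambda_n)$ with at most $n$ parts and generic $a,b,q,p,t\in\mathbb{C}$, \begin{multline*} W_\lambda(q^{\lambda}t^{\delta(n)};q,p,t,a,b)=\prod_{k=1}^n\left\{\frac{(qbt^{n-k},qt^{n-k})_{\lambda_k}(at^{2n-2k})_{2\lambda_k}}{((a/b)t^{n-k},at^{n-k})_{\lambda_k}(qbt^{n+1-2k})_{2\lambda_k}}t^{(n+1-2k)\lambda_k}\right\}\\ \cdot(a/(qb))^{|\lambda|}\prod_{1\le i<j\le n}\frac{(qt^{j-i-1})_{\lambda_i-\lambda_j}(at^{2n-i-j})_{\lambda_i+\lambda_j}}{(qt^{j-i})_{\lambda_i-\lambda_j}(at^{1+2n-i-j})_{\lambda_i+\lambda_j}}. \end{multline*}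
   Context: Fix $|p|<1$; parameters generic. $E(x)=(x;p)_\infty(p/x;p)_\infty$. For integer $m\ge0$, $(a)_m=\prod_{k=0}^{m-1}E(aq^k)$, for $m<0$, $(a)_m=1/(aq^m)_{-m}$; for a partition $\lambda$ with $n$ parts $(a)_\lambda=\prod_{i=1}^n(at^{1-i})_{\lambda_i}$; several arguments denote products; integer subscripts denote the single-integer symbol. $|\lambda|=\sum_i\lambda_i$, $q^\lambda t^{\delta(n)}=(q^{\lambda_1}t^{n-1},\dots,q^{\lambda_n})$. For $n$-part partitions with $\lambda_1\ge\mu_1\ge\dots\ge\lambda_n\ge\mu_n$, $\lambda_{n+1}=\mu_{n+1}=0$, $H_{\lambda/\mu}(q,p,t,b)=\prod_{1\le i<j\le n}\Big\{\frac{(q^{\mu_i-\mu_{j-1}}t^{j-i})_{\mu_{j-1}-\lambda_j}(q^{\lambda_i+\lambda_j}t^{3-j-i}b)_{\mu_{j-1}-\lambda_j}}{(q^{\mu_i-\mu_{j-1}+1}t^{j-i-1})_{\mu_{j-1}-\lambda_j}(q^{\lambda_i+\lambda_j+1}t^{2-j-i}b)_{\mu_{j-1}-\lambda_j}}\frac{(q^{\lambda_i-\mu_{j-1}+1}t^{j-i-1})_{\mu_{j-1}-\lambda_j}}{(q^{\lambda_i-\mu_{j-1}}t^{j-i})_{\mu_{j-1}-\lambda_j}}\Big\}\prod_{1\le i<j-1\le n}\frac{(q^{\mu_i+\lambda_j+1}t^{1-j-i}b)_{\mu_{j-1}-\lambda_j}}{(q^{\mu_i+\lambda_j}t^{2-j-i}b)_{\mu_{j-1}-\lambda_j}}$;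 for $x\in\mathbb{C}$, $W_{\lambda/\mu}(x;q,p,t,a,b)=H_{\lambda/\mu}\frac{(x^{-1},ax)_\lambda(qbx/t,qb/(axt))_\mu}{(x^{-1},ax)_\mu(qbx,qb/(ax))_\lambda}\prod_{i=1}^n\frac{E(bt^{1-2i}q^{2\mu_i})}{E(bt^{1-2i})}\frac{(bt^{1-2i})_{\mu_i+\lambda_{i+1}}}{(bqt^{-2i})_{\mu_i+\lambda_{i+1}}}t^{i(\mu_i-\lambda_{i+1})}$ (zero if the interlacing fails); recursively $W_{\lambda/\mu}(y,z_1,\dots,z_\ell;q,p,t,a,b)=\sum_\nu W_{\lambda/\nu}(yt^{-\ell};q,p,t,at^{2\ell},bt^\ell)W_{\nu/\mu}(z_1,\dots,z_\ell;q,p,t,a,b)$ over $\nu$ with $\lambda_1\ge\nu_1\ge\dots\ge\lambda_n\ge\nu_n\ge0$; $W_\lambda=W_{\lambda/0}$. *)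

theory Defs
  imports "HOL-Analysis.Analysis"
begin

definition qp_inf :: "complex \<Rightarrow> complex \<Rightarrow> complex" where
  "qp_inf x p = prodinf (\<lambda>k. 1 - x * p ^ k)"

definition ellE :: "complex \<Rightarrow> complex \<Rightarrow> complex" where
  "ellE p x = qp_inf x p * qp_inf (p / x) p"

definition epoch :: "complex \<Rightarrow> complex \<Rightarrow> complex \<Rightarrow> int \<Rightarrow> complex" where
  "epoch q p a m =
     (if m \<ge> 0 then (\<Prod>k<nat m. ellE p (a * q ^ k))
      else 1 / (\<Prod>k<nat (- m). ellE p (a * q powi m * q ^ k)))"

text \<open>Partitions with n parts are lists of length n; part lam i is the
  1-indexed i-th part, and 0 outside 1..n (so lam_(n+1) = 0).\<close>
definition part :: "nat list \<Rightarrow> nat \<Rightarrow> int" where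
  "part lam i = (if 1 \<le> i \<and> i \<le> length lam then int (lam ! (i - 1)) else 0)"

definition epochP :: "complex \<Rightarrow> complex \<Rightarrow> complex \<Rightarrow> complex \<Rightarrow> nat list \<Rightarrow> complex" where
  "epochP q p t a lam =
     (\<Prod>i\<in>{1..length lam}. epoch q p (a * t powi (1 - int i)) (part lam i))"

text \<open>The quotient (a)_lambda / (a)_mu written in cancelled form
  prod_i (a t^(1-i) q^(mu_i))_(lambda_i - mu_i) (valid for lambda_i >= mu_i);
  this is the entire function of a that the quotient denotes.\<close>
definition epochP_ratio :: "complex \<Rightarrow> complex \<Rightarrow> complex \<Rightarrow> complex \<Rightarrow> nat list \<Rightarrow> nat list \<Rightarrow> complex" where
  "epochP_ratio q p t a lam mu =
     (\<Prod>i\<in>{1..length lam}.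
        epoch q p (a * t powi (1 - int i) * q powi part mu i) (part lam i - part mu i))"

definition interlace :: "nat list \<Rightarrow> nat list \<Rightarrow> bool" where
  "interlace lam mu \<longleftrightarrow> length mu = length lam \<and>
     (\<forall>i<length lam. mu ! i \<le> lam ! i \<and> (Suc i < length lam \<longrightarrow> lam ! Suc i \<le> mu ! i))"

definition Hfac :: "complex \<Rightarrow> complex \<Rightarrow> complex \<Rightarrow> complex \<Rightarrow> nat list \<Rightarrow> nat list \<Rightarrow> complex" where
  "Hfac q p t b lam mu =
    (let n = length lam; L = part lam; M = part mu;
         P = epoch q p; ii = int; m = (\<lambda>j. M (j - 1) - L j) in
     (\<Prod>i\<in>{1..n}. \<Prod>j\<in>{i+1..n}.
        (P (q powi (M i - M (j - 1)) * t powi (ii j - ii i)) (m j)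
         * P (q powi (L i + L j) * t powi (3 - ii j - ii i) * b) (m j))
        / (P (q powi (M i - M (j - 1) + 1) * t powi (ii j - ii i - 1)) (m j)
           * P (q powi (L i + L j + 1) * t powi (2 - ii j - ii i) * b) (m j))
        * (P (q powi (L i - M (j - 1) + 1) * t powi (ii j - ii i - 1)) (m j)
           / P (q powi (L i - M (j - 1)) * t powi (ii j - ii i)) (m j)))
     * (\<Prod>i\<in>{1..n}. \<Prod>j\<in>{i+2..n+1}.
        P (q powi (M i + L j + 1) * t powi (1 - ii j - ii i) * b) (m j)
        / P (q powi (M i + L j) * t powi (2 - ii j - ii i) * b) (m j)))"

definition W1 :: "complex \<Rightarrow> complex \<Rightarrow> complex \<Rightarrow> nat list \<Rightarrow> nat list
                  \<Rightarrow> complex \<Rightarrow> complex \<Rightarrow> complex \<Rightarrow> complex" where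
  "W1 q p t lam mu x a b =
    (if interlace lam mu then
      (let n = length lam; L = part lam; M = part mu; P = epoch q p; ii = int in
       Hfac q p t b lam mu
       * epochP_ratio q p t (1 / x) lam mu * epochP_ratio q p t (a * x) lam mu
       * (epochP q p t (q * b * x / t) mu * epochP q p t (q * b / (a * x * t)) mu)
       / (epochP q p t (q * b * x) lam * epochP q p t (q * b / (a * x)) lam)
       * (\<Prod>i\<in>{1..n}.
           ellE p (b * t powi (1 - 2 * ii i) * q powi (2 * M i)) / ellE p (b * t powi (1 - 2 * ii i))
           * P (b * t powi (1 - 2 * ii i)) (M i + L (i + 1))
           / P (b * q * t powi (- 2 * ii i)) (M i + L (i + 1))
           * t powi (ii i * (M i - L (i + 1)))))
     else 0)"

text \<open>Multivariable W via the branching recursion (variables given as a list);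
  with no variables it is the Kronecker delta.\<close>
fun Wm :: "complex \<Rightarrow> complex \<Rightarrow> complex \<Rightarrow> nat list \<Rightarrow> nat list
           \<Rightarrow> complex list \<Rightarrow> complex \<Rightarrow> complex \<Rightarrow> complex" where
  "Wm q p t lam mu [] a b = (if lam = mu then 1 else 0)"
| "Wm q p t lam mu [y] a b = W1 q p t lam mu y a b"
| "Wm q p t lam mu (y # z # zs) a b =
     (let l = int (length (z # zs)) in
      (\<Sum>nu\<in>{nu. interlace lam nu}.
         W1 q p t lam nu (y * t powi (- l)) (a * t powi (2 * l)) (b * t powi l)
         * Wm q p t nu mu (z # zs) a b))"

definition generic_params :: "complex \<Rightarrow> complex \<Rightarrow> complex \<Rightarrow> complex \<Rightarrow> complex \<Rightarrow> bool" where
  "generic_params q p t a b \<longleftrightarrow> q \<noteq> 0 \<and> t \<noteq> 0 \<and> a \<noteq> 0 \<and> b \<noteq> 0 \<and>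
     (\<forall>k m r s l :: int. (k, m, r, s) \<noteq> (0, 0, 0, 0) \<longrightarrow>
        q powi k * t powi m * a powi r * b powi s \<noteq> p powi l)"

end

theory Submission
  imports Defs
begin

text \<open>
  By the branching rule, \<open>W\<^sub>\<lambda>(x\<^sub>1, \<dots>, x\<^sub>n)\<close> is the sum over all \<open>\<nu>\<close> interlacing \<open>\<lambda>\<close>
  of \<open>W\<^sub>\<lambda>\<^sub>/\<^sub>\<nu>(x\<^sub>1) W\<^sub>\<nu>(x\<^sub>2, \<dots>, x\<^sub>n)\<close>, with shifted parameters in the first factor.
  The coefficient \<open>W\<^sub>\<nu>\<^sub>/\<^sub>\<kappa>(q^x)\<close> contains \<open>(q^-x)\<^sub>\<nu>/(q^-x)\<^sub>\<kappa>\<close>, which vanishes when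
  \<open>\<kappa>\<^sub>1 \<le> x < \<nu>\<^sub>1\<close>; by induction \<open>W\<^sub>\<nu>(q^\<mu> t^\<delta>) = 0\<close> unless \<open>\<nu>\<^sub>i \<le> \<mu>\<^sub>i\<close> for all \<open>i\<close>.
  At the spectral vector \<open>x\<^sub>i = q^\<lambda>\<^sub>i t^(n-i)\<close> interlacing therefore leaves the single
  term \<open>\<nu> = (\<lambda>\<^sub>2, \<dots>, \<lambda>\<^sub>n, 0)\<close>.  For it \<open>H\<^sub>\<lambda>\<^sub>/\<^sub>\<nu> = 1\<close>, and the remaining shifted
  factorials collapse, by the reflection \<open>E(1/x) = -E(x)/x\<close>, the shift identity
  \<open>(y)\<^sub>k E(y q^k) = E(y) (y q)\<^sub>k\<close> and telescoping over the parts, to the quotient of the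
  right-hand sides for \<open>\<lambda>\<close> and \<open>(\<lambda>\<^sub>2, \<dots>, \<lambda>\<^sub>n)\<close>.  Induction on the number of parts concludes.
\<close>

lemma prod_atLeastAtMost_Suc_split_first:
  "(\<Prod>k\<in>{1..Suc m}. f k) = f 1 * (\<Prod>k\<in>{1..m}. f (Suc k))"
proof -
  have "{1..Suc m} = insert 1 {Suc 1..Suc m}" by auto
  then have "(\<Prod>k\<in>{1..Suc m}. f k) = f 1 * (\<Prod>k\<in>{Suc 1..Suc m}. f k)" by simp
  also have "(\<Prod>k\<in>{Suc 1..Suc m}. f k) = (\<Prod>k\<in>{1..m}. f (Suc k))"
    by (rule prod.shift_bounds_cl_Suc_ivl)
  finally show ?thesis .
qed

lemma prod_triangle_Suc_split_first:
  "(\<Prod>i\<in>{1..Suc m}. \<Prod>j\<in>{i+1..Suc m}. f i j)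
   = (\<Prod>k\<in>{1..m}. f 1 (Suc k)) * (\<Prod>i\<in>{1..m}. \<Prod>j\<in>{i+1..m}. f (Suc i) (Suc j))"
proof -
  have "(\<Prod>j\<in>{Suc i+1..Suc m}. f (Suc i) j) = (\<Prod>j\<in>{i+1..m}. f (Suc i) (Suc j))" for i
    using prod.shift_bounds_cl_Suc_ivl[of "f (Suc i)" "i+1" m] by simp
  moreover have "(\<Prod>j\<in>{1+1..Suc m}. f 1 j) = (\<Prod>k\<in>{1..m}. f 1 (Suc k))"
    using prod.shift_bounds_cl_Suc_ivl[of "f 1" 1 m] by simp
  ultimately show ?thesis
    unfolding prod_atLeastAtMost_Suc_split_first[of "\<lambda>i. \<Prod>j\<in>{i+1..Suc m}. f i j"] by simp
qed

lemma prod_atLeastAtMost_cut: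
  fixes m N :: nat
  assumes "m \<le> N" "\<And>i. m < i \<Longrightarrow> i \<le> N \<Longrightarrow> f i = 1"
  shows "(\<Prod>i\<in>{1..N}. f i) = (\<Prod>i\<in>{1..m}. f i)"
  using assms by (intro prod.mono_neutral_right) auto

lemma prod_telescope_ratio_down:
  fixes g h :: "nat \<Rightarrow> 'a::field"
  shows "(\<Prod>i\<in>{1..Suc m}. g i / h i) = g (Suc m) / h 1 * (\<Prod>k\<in>{1..m}. g k / h (Suc k))"
proof (induction m)
  case (Suc m)
  have "(\<Prod>i\<in>{1..Suc (Suc m)}. g i / h i)
      = g (Suc (Suc m)) / h 1 * ((\<Prod>k\<in>{1..m}. g k / h (Suc k)) * (g (Suc m) / h (Suc (Suc m))))"
    unfolding atLeastAtMostSuc_conv[of 1 "Suc m", simplified] using Suc by (simp add: field_simps)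
  then show ?case
    by (simp add: atLeastAtMostSuc_conv)
qed simp

lemma prod_telescope_ratio_up:
  fixes g h :: "nat \<Rightarrow> 'a::field"
  shows "(\<Prod>i\<in>{1..Suc m}. g i / h i) = g 1 / h (Suc m) * (\<Prod>k\<in>{1..m}. g (Suc k) / h k)"
proof (induction m)
  case (Suc m)
  have "(\<Prod>i\<in>{1..Suc (Suc m)}. g i / h i)
      = (\<Prod>i\<in>{1..Suc m}. g i / h i) * (g (Suc (Suc m)) / h (Suc (Suc m)))"
    by (simp add: atLeastAtMostSuc_conv ac_simps)
  also have "\<dots> = g 1 / h (Suc (Suc m)) * ((\<Prod>k\<in>{1..m}. g (Suc k) / h k) * (g (Suc (Suc m)) / h (Suc m)))"
    unfolding Suc by (simp add: field_simps)
  also have "(\<Prod>k\<in>{1..m}. g (Suc k) / h k) * (g (Suc (Suc m)) / h (Suc m)) = (\<Prod>k\<in>{1..Suc m}. g (Suc k) / h k)"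
    by (simp add: atLeastAtMostSuc_conv)
  finally show ?case .
qed simp

lemma prod_power_int:
  fixes t :: "'a::field"
  assumes "t \<noteq> 0"
  shows "(\<Prod>i\<in>A. t powi f i) = t powi (\<Sum>i\<in>A. f i)"
  by (induction A rule: infinite_finite_induct) (simp_all add: power_int_add assms)

lemma sum_weighted_differences:
  fixes L :: "nat \<Rightarrow> int"
  shows "(\<Sum>i\<in>{1..Suc m}. (int i - 1) * (L i - L (Suc i)))
         = (\<Sum>k\<in>{1..m}. L (Suc k)) - int m * L (Suc (Suc m))"
proof (induction m)
  case (Suc m)
  then show ?case
    by (simp add: atLeastAtMostSuc_conv algebra_simps)
qed simp

section \<open>Theta functions and elliptic shifted factorials\<close>

lemma qp_inf_convergent:
  fixes x p :: complex
  assumes "norm p < 1"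
  shows "convergent_prod (\<lambda>k. 1 - x * p ^ k)"
proof -
  have "summable (\<lambda>k. norm x * norm p ^ k)"
    using assms by (intro summable_mult summable_geometric) auto
  then have "summable (\<lambda>k. norm ((1 - x * p ^ k) - 1))"
    by (simp add: norm_mult norm_power)
  then show ?thesis
    by (intro abs_convergent_prod_imp_convergent_prod summable_imp_abs_convergent_prod)
qed

lemma qp_inf_eq_0_iff:
  assumes "norm p < 1"
  shows "qp_inf x p = 0 \<longleftrightarrow> (\<exists>k. x * p ^ k = 1)"
proof
  assume "qp_inf x p = 0"
  then show "\<exists>k. x * p ^ k = 1"
    using prodinf_nonzero[OF qp_inf_convergent[OF assms]] unfolding qp_inf_def by force
next
  assume "\<exists>k. x * p ^ k = 1"
  then obtain k where "x * p ^ k = 1" by blast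
  then show "qp_inf x p = 0"
    using has_prod_zeroI[OF convergent_prod_has_prod[OF qp_inf_convergent[OF assms, of x]], of k]
    unfolding qp_inf_def by simp
qed

lemma qp_inf_1: "norm p < 1 \<Longrightarrow> qp_inf 1 p = 0"
  by (subst qp_inf_eq_0_iff) (auto intro: exI[of _ 0])

lemma qp_inf_rec:
  assumes "norm p < 1"
  shows "qp_inf x p = (1 - x) * qp_inf (x * p) p"
proof (cases "x = 1")
  case True
  then show ?thesis using qp_inf_1[OF assms] by simp
next
  case False
  have "(\<Prod>k. 1 - x * p ^ Suc k) = qp_inf x p / (1 - x)"
    using prodinf_split_head[OF qp_inf_convergent[OF assms]] False unfolding qp_inf_def by simp
  moreover have "(\<lambda>k. 1 - x * p ^ Suc k) = (\<lambda>k. 1 - (x * p) * p ^ k)"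
    by (simp add: mult_ac)
  ultimately show ?thesis
    using False unfolding qp_inf_def by (simp add: field_simps)
qed

lemma ellE_1: "norm p < 1 \<Longrightarrow> ellE p 1 = 0"
  by (simp add: ellE_def qp_inf_1)

lemma ellE_inverse:
  assumes "norm p < 1" "x \<noteq> 0"
  shows "ellE p (1 / x) = - (1 / x) * ellE p x"
proof -
  have "ellE p (1 / x) = (1 - 1 / x) * qp_inf (p / x) p * qp_inf (p * x) p"
    unfolding ellE_def using qp_inf_rec[OF assms(1), of "1 / x"] by (simp add: mult_ac)
  moreover have "ellE p x = (1 - x) * qp_inf (p * x) p * qp_inf (p / x) p"
    unfolding ellE_def using qp_inf_rec[OF assms(1), of x] by (simp add: mult_ac)
  moreover have "1 - 1 / x = - (1 / x) * (1 - x)"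
    using assms(2) by (simp add: field_simps)
  ultimately show ?thesis by (simp add: mult_ac)
qed

lemma ellE_nonzero:
  assumes "norm p < 1" "\<And>l::int. x \<noteq> p powi l"
  shows "ellE p x \<noteq> 0"
proof -
  have "qp_inf x p \<noteq> 0"
  proof
    assume "qp_inf x p = 0"
    then obtain k where "x * p ^ k = 1"
      using qp_inf_eq_0_iff[OF assms(1)] by blast
    moreover from this have "p ^ k \<noteq> 0" by (metis mult_zero_right zero_neq_one)
    ultimately have "x = p powi (- int k)"
      by (simp add: power_int_minus field_simps)
    with assms(2) show False by blast
  qed
  moreover have "qp_inf (p / x) p \<noteq> 0"
  proof
    assume "qp_inf (p / x) p = 0"
    then obtain k where k: "p / x * p ^ k = 1"
      using qp_inf_eq_0_iff[OF assms(1)] by blast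
    then have "x \<noteq> 0" by auto
    with k have "x = p ^ Suc k"
      by (simp add: field_simps)
    then have "x = p powi int (Suc k)"
      by (simp only: power_int_of_nat)
    with assms(2) show False by blast
  qed
  ultimately show ?thesis
    unfolding ellE_def by simp
qed

lemma epoch_of_nat: "epoch q p c (int m) = (\<Prod>k<m. ellE p (c * q ^ k))"
  by (simp add: epoch_def)

lemma epoch_0 [simp]: "epoch q p c 0 = 1"
  by (simp add: epoch_def)

lemma epoch_Suc: "epoch q p c (int (Suc m)) = epoch q p c (int m) * ellE p (c * q ^ m)"
  by (simp only: epoch_of_nat prod.lessThan_Suc)

lemma epoch_add_nat:
  "epoch q p c (int m + int k) = epoch q p c (int m) * epoch q p (c * q ^ m) (int k)"
proof (induction k)
  case (Suc k)
  have "epoch q p c (int m + int (Suc k)) = epoch q p c (int (m + k)) * ellE p (c * q ^ (m + k))"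
    using epoch_Suc[of q p c "m + k"] by (simp add: add_ac)
  also have "\<dots> = epoch q p c (int m) * epoch q p (c * q ^ m) (int k) * ellE p (c * q ^ m * q ^ k)"
    using Suc by (simp add: power_add mult_ac)
  also have "\<dots> = epoch q p c (int m) * epoch q p (c * q ^ m) (int (Suc k))"
    by (simp only: epoch_Suc mult_ac)
  finally show ?case .
qed simp

lemma epoch_add:
  assumes "0 \<le> m" "0 \<le> k"
  shows "epoch q p c (m + k) = epoch q p c m * epoch q p (c * q powi m) k"
  using epoch_add_nat[of q p c "nat m" "nat k"] assms by (simp add: power_int_nonneg_exp)

lemma epoch_shift_nat:
  "epoch q p y (int m) * ellE p (y * q ^ m) = ellE p y * epoch q p (y * q) (int m)"
proof (induction m)
  case (Suc m)
  have "epoch q p y (int (Suc m)) * ellE p (y * q ^ Suc m)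
      = (epoch q p y (int m) * ellE p (y * q ^ m)) * ellE p (y * q ^ Suc m)"
    by (simp only: epoch_Suc)
  also have "\<dots> = ellE p y * (epoch q p (y * q) (int m) * ellE p (y * q * q ^ m))"
    using Suc by (simp add: mult_ac)
  also have "\<dots> = ellE p y * epoch q p (y * q) (int (Suc m))"
    by (simp only: epoch_Suc)
  finally show ?case .
qed simp

lemma epoch_shift_eq_div:
  assumes "0 \<le> m" "0 \<le> k" "epoch q p c m \<noteq> 0"
  shows "epoch q p (c * q powi m) k = epoch q p c (m + k) / epoch q p c m"
  using epoch_add[OF assms(1,2), of q p c] assms(3) by simp

lemma epoch_reflect:
  assumes "norm p < 1" "q \<noteq> 0" "w \<noteq> 0"
  shows "epoch q p (q powi (1 - int m) / w) (int m)
           = (\<Prod>r<m. - (1 / (w * q ^ r))) * epoch q p w (int m)"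
proof -
  have "epoch q p (q powi (1 - int m) / w) (int m)
        = (\<Prod>r<m. ellE p (q powi (1 - int m) / w * q ^ (m - Suc r)))"
    unfolding epoch_of_nat by (rule prod.nat_diff_reindex[symmetric])
  also have "\<dots> = (\<Prod>r<m. ellE p (1 / (w * q ^ r)))"
  proof (rule prod.cong[OF refl])
    fix r assume "r \<in> {..<m}"
    then have "q powi (1 - int m) * q ^ (m - Suc r) = q powi (- int r)"
      using assms(2) by (simp add: of_nat_diff power_int_add[symmetric] flip: power_int_of_nat)
    then show "ellE p (q powi (1 - int m) / w * q ^ (m - Suc r)) = ellE p (1 / (w * q ^ r))"
      by (simp add: power_int_minus field_simps)
  qed
  also have "\<dots> = (\<Prod>r<m. - (1 / (w * q ^ r)) * ellE p (w * q ^ r))"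
    using ellE_inverse[OF assms(1)] assms(2,3) by (intro prod.cong) auto
  also have "\<dots> = (\<Prod>r<m. - (1 / (w * q ^ r))) * epoch q p w (int m)"
    by (simp only: epoch_of_nat prod.distrib)
  finally show ?thesis .
qed

definition neg_q_inverse_prod :: "complex \<Rightarrow> nat \<Rightarrow> complex" where
  "neg_q_inverse_prod q v = (\<Prod>r<v. - (1 / q ^ Suc r))"

lemma neg_q_inverse_prod_nonzero: "q \<noteq> 0 \<Longrightarrow> neg_q_inverse_prod q v \<noteq> 0"
  by (simp add: neg_q_inverse_prod_def prod_zero_iff)

lemma neg_q_inverse_prod_add:
  "neg_q_inverse_prod q (s + d) = neg_q_inverse_prod q s * (\<Prod>r<d. - (1 / q ^ Suc (s + r)))"
  by (induction d) (simp_all add: neg_q_inverse_prod_def mult_ac)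

lemma neg_q_inverse_prod_scaled:
  assumes "w \<noteq> 0"
  shows "neg_q_inverse_prod q v = (w / q) ^ v * (\<Prod>r<v. - (1 / (w * q ^ r)))"
proof -
  have "neg_q_inverse_prod q v = (\<Prod>r<v. w / q * - (1 / (w * q ^ r)))"
    unfolding neg_q_inverse_prod_def using assms by (intro prod.cong) auto
  then show ?thesis
    by (simp only: prod.distrib prod_constant card_lessThan)
qed

lemma epoch_q_power_reflect:
  assumes "norm p < 1" "q \<noteq> 0" "u \<noteq> 0" "epoch q p (q * u) (int s) \<noteq> 0"
  shows "epoch q p (q powi (- int (s + d)) / u) (int d)
    = neg_q_inverse_prod q (s + d) / neg_q_inverse_prod q s * (1 / u) ^ d
      * (epoch q p (q * u) (int (s + d)) / epoch q p (q * u) (int s))"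
proof -
  define w where "w = q * u * q powi int s"
  have "w \<noteq> 0"
    using assms(2,3) by (simp add: w_def)
  have "q powi (- int (s + d)) / u = q powi (1 - int d) / w"
    using assms(2,3) by (simp add: w_def power_int_diff power_int_minus power_add field_simps)
  then have "epoch q p (q powi (- int (s + d)) / u) (int d)
      = (\<Prod>r<d. - (1 / (w * q ^ r))) * epoch q p w (int d)"
    using epoch_reflect[OF assms(1,2) \<open>w \<noteq> 0\<close>] by simp
  also have "(\<Prod>r<d. - (1 / (w * q ^ r))) = (\<Prod>r<d. - (1 / q ^ Suc (s + r)) * (1 / u))"
    by (intro prod.cong) (simp_all add: w_def power_add mult_ac)
  also have "\<dots> = (\<Prod>r<d. - (1 / q ^ Suc (s + r))) * (1 / u) ^ d"
    by (simp only: prod.distrib prod_constant card_lessThan)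
  also have "(\<Prod>r<d. - (1 / q ^ Suc (s + r))) = neg_q_inverse_prod q (s + d) / neg_q_inverse_prod q s"
    using neg_q_inverse_prod_nonzero[OF assms(2), of s] by (simp add: neg_q_inverse_prod_add)
  also have "epoch q p w (int d) = epoch q p (q * u) (int (s + d)) / epoch q p (q * u) (int s)"
    unfolding w_def using epoch_shift_eq_div[of "int s" "int d" q p "q * u"] assms(4) by simp
  finally show ?thesis by simp
qed

definition qtab_monomial :: "complex \<Rightarrow> complex \<Rightarrow> complex \<Rightarrow> complex \<Rightarrow> int \<Rightarrow> int \<Rightarrow> int \<Rightarrow> int \<Rightarrow> complex" where
  "qtab_monomial q t a b \<alpha> \<beta> \<gamma> \<delta> = q powi \<alpha> * t powi \<beta> * a powi \<gamma> * b powi \<delta>"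

locale generic_elliptic =
  fixes q p t a b :: complex
  assumes nome: "norm p < 1" and generic: "generic_params q p t a b"
begin

lemma q_nonzero: "q \<noteq> 0" and t_nonzero: "t \<noteq> 0" and a_nonzero: "a \<noteq> 0" and b_nonzero: "b \<noteq> 0"
  using generic unfolding generic_params_def by auto

lemma t_powi_split: "k = k1 + k2 \<Longrightarrow> t powi k = t powi k1 * t powi k2"
  using t_nonzero by (simp add: power_int_add)

lemma ellE_monomial_nonzero:
  assumes "c = qtab_monomial q t a b \<alpha> \<beta> \<gamma> \<delta>" "(\<beta>, \<gamma>, \<delta>) \<noteq> (0, 0, 0)"
  shows "ellE p c \<noteq> 0"
  using ellE_nonzero[OF nome] generic assms unfolding generic_params_def qtab_monomial_def by auto

lemma epoch_monomial_nonzero: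
  assumes "c = qtab_monomial q t a b \<alpha> \<beta> \<gamma> \<delta>" "(\<beta>, \<gamma>, \<delta>) \<noteq> (0, 0, 0)"
  shows "epoch q p c m \<noteq> 0"
proof -
  have "ellE p (c * q powi k) \<noteq> 0" for k
    using assms q_nonzero
    by (intro ellE_monomial_nonzero[where \<alpha> = "\<alpha> + k"]) (simp_all add: qtab_monomial_def power_int_add mult_ac)
  from this[of "int _"] this[of "m + int _"] show ?thesis
    using q_nonzero by (simp add: epoch_def prod_zero_iff power_int_add mult.assoc)
qed

lemma epochP_monomial_nonzero:
  assumes "c = qtab_monomial q t a b \<alpha> \<beta> \<gamma> \<delta>" "(\<gamma>, \<delta>) \<noteq> (0, 0)"
  shows "epochP q p t c mu \<noteq> 0"
proof -
  have "epoch q p (c * t powi (1 - int i)) (part mu i) \<noteq> 0" for i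
    using assms t_nonzero
    by (intro epoch_monomial_nonzero[where \<alpha> = \<alpha> and \<beta> = "\<beta> + (1 - int i)" and \<gamma> = \<gamma> and \<delta> = \<delta>])
      (auto simp: qtab_monomial_def power_int_add mult_ac)
  then show ?thesis
    by (simp add: epochP_def prod_zero_iff)
qed

end

section \<open>Partitions and the branching rule\<close>

lemma part_0 [simp]: "part lam 0 = 0"
  by (simp add: part_def)

lemma part_nonneg [simp]: "0 \<le> part lam i"
  by (simp add: part_def)

lemma part_Cons_1 [simp]: "part (x # xs) (Suc 0) = int x"
  by (simp add: part_def)

lemma part_Cons_Suc: "1 \<le> i \<Longrightarrow> part (x # xs) (Suc i) = part xs i"
  by (auto simp: part_def nth_Cons')

lemma part_beyond: "length lam < i \<Longrightarrow> part lam i = 0"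
  by (simp add: part_def)

lemma part_replicate_0 [simp]: "part (replicate n 0) i = 0"
  by (auto simp: part_def)

lemma part_append_replicate_0 [simp]: "part (lam @ replicate n 0) i = part lam i"
  by (auto simp: part_def nth_append)

lemma part_Suc_le: "sorted_wrt (\<ge>) lam \<Longrightarrow> 1 \<le> i \<Longrightarrow> part lam (Suc i) \<le> part lam i"
  by (auto simp: part_def sorted_wrt_iff_nth_less)

lemma part_le_hd: "sorted_wrt (\<ge>) (x # xs) \<Longrightarrow> part xs i \<le> int x"
  by (auto simp: part_def)

lemma list_eq_by_part:
  assumes "length l1 = length l2" "\<And>i. 1 \<le> i \<Longrightarrow> part l1 i = part l2 i"
  shows "l1 = l2"
proof (rule nth_equalityI)
  fix i assume "i < length l1"
  with assms(2)[of "Suc i"] assms(1) show "l1 ! i = l2 ! i" by (simp add: part_def)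
qed (rule assms(1))

lemma interlace_iff_part:
  "interlace lam nu \<longleftrightarrow> length nu = length lam \<and>
     (\<forall>i\<ge>1. part nu i \<le> part lam i \<and> part lam (Suc i) \<le> part nu i)"
  (is "_ \<longleftrightarrow> _ \<and> ?parts")
proof (cases "length nu = length lam")
  case True
  have "?parts \<longleftrightarrow> (\<forall>i<length lam. nu ! i \<le> lam ! i \<and> (Suc i < length lam \<longrightarrow> lam ! Suc i \<le> nu ! i))"
  proof
    assume parts: ?parts
    show "\<forall>i<length lam. nu ! i \<le> lam ! i \<and> (Suc i < length lam \<longrightarrow> lam ! Suc i \<le> nu ! i)"
    proof (intro allI impI conjI)
      fix i assume i: "i < length lam"
      have "part nu (Suc i) \<le> part lam (Suc i)" "part lam (Suc (Suc i)) \<le> part nu (Suc i)"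
        using parts by auto
      with i True show "nu ! i \<le> lam ! i" "Suc i < length lam \<Longrightarrow> lam ! Suc i \<le> nu ! i"
        by (simp_all add: part_def)
    qed
  next
    assume nth: "\<forall>i<length lam. nu ! i \<le> lam ! i \<and> (Suc i < length lam \<longrightarrow> lam ! Suc i \<le> nu ! i)"
    show ?parts
    proof (intro allI impI conjI)
      fix i :: nat assume "1 \<le> i"
      then show "part nu i \<le> part lam i" "part lam (Suc i) \<le> part nu i"
        using nth[rule_format, of "i - 1"] True by (auto simp: part_def)
    qed
  qed
  with True show ?thesis
    unfolding interlace_def by simp
qed (auto simp: interlace_def)

lemma finite_interlace: "finite {nu. interlace lam nu}"
proof (rule finite_subset)
  show "{nu. interlace lam nu} \<subseteq> {nu. set nu \<subseteq> {0..sum_list lam} \<and> length nu = length lam}"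
  proof safe
    fix nu x assume "interlace lam nu" "x \<in> set nu"
    then obtain i where "i < length lam" "x \<le> lam ! i"
      unfolding interlace_def by (auto simp: in_set_conv_nth)
    with elem_le_sum_list[of i lam] show "x \<in> {0..sum_list lam}" by simp
  qed (simp add: interlace_def)
  show "finite {nu. set nu \<subseteq> {0..sum_list lam} \<and> length nu = length lam}"
    by (rule finite_lists_length_eq) simp
qed

lemma Hfac_eq_1:
  assumes "\<And>j. 2 \<le> j \<Longrightarrow> part mu (j - 1) = part lam j"
  shows "Hfac q p t b lam mu = 1"
proof -
  have "part mu (j - Suc 0) - part lam j = 0" if "2 \<le> j" for j
    using assms[OF that] by simp
  then show ?thesis
    unfolding Hfac_def Let_def by (auto intro!: prod.neutral)
qed

definition W1_weight :: "complex \<Rightarrow> complex \<Rightarrow> complex \<Rightarrow> complex \<Rightarrow> nat list \<Rightarrow> nat list \<Rightarrow> complex" where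
  "W1_weight q p t b lam mu = (let L = part lam; M = part mu; P = epoch q p in
     (\<Prod>i\<in>{1..length lam}.
        ellE p (b * t powi (1 - 2 * int i) * q powi (2 * M i)) / ellE p (b * t powi (1 - 2 * int i))
        * P (b * t powi (1 - 2 * int i)) (M i + L (i + 1))
        / P (b * q * t powi (- 2 * int i)) (M i + L (i + 1))
        * t powi (int i * (M i - L (i + 1)))))"

lemma W1_interlace:
  assumes "interlace lam mu"
  shows "W1 q p t lam mu x a b = Hfac q p t b lam mu
       * epochP_ratio q p t (1 / x) lam mu * epochP_ratio q p t (a * x) lam mu
       * (epochP q p t (q * b * x / t) mu * epochP q p t (q * b / (a * x * t)) mu)
       / (epochP q p t (q * b * x) lam * epochP q p t (q * b / (a * x)) lam)
       * W1_weight q p t b lam mu"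
  unfolding W1_def W1_weight_def Let_def if_P[OF assms] ..

lemma Wm_Cons:
  "Wm q p t lam mu (y # zs) a b =
     (\<Sum>nu\<in>{nu. interlace lam nu}.
        W1 q p t lam nu (y * t powi (- int (length zs))) (a * t powi (2 * int (length zs)))
          (b * t powi int (length zs))
        * Wm q p t nu mu zs a b)"
proof (cases zs)
  case Nil
  have "(\<Sum>nu\<in>{nu. interlace lam nu}. W1 q p t lam nu y a b * (if nu = mu then 1 else 0))
      = (if interlace lam mu then W1 q p t lam mu y a b else 0)"
    using finite_interlace[of lam] by (simp add: sum.delta' if_distrib cong: if_cong)
  also have "\<dots> = W1 q p t lam mu y a b"
    by (simp add: W1_def)
  finally show ?thesis
    using Nil by simp
qed (simp add: Let_def)

fun spectral_vector :: "complex \<Rightarrow> complex \<Rightarrow> nat list \<Rightarrow> complex list" where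
  "spectral_vector q t [] = []"
| "spectral_vector q t (x # xs) = (q powi int x * t powi int (length xs)) # spectral_vector q t xs"

lemma length_spectral_vector [simp]: "length (spectral_vector q t lam) = length lam"
  by (induction lam) auto

lemma spectral_vector_conv_map:
  "spectral_vector q t lam
     = map (\<lambda>i. q powi part lam i * t powi (int (length lam) - int i)) [1..<length lam + 1]"
proof (induction lam)
  case (Cons x xs)
  have "[1..<length (x # xs) + 1] = 1 # map Suc [1..<length xs + 1]"
    by (simp add: map_Suc_upt upt_conv_Cons del: upt_Suc)
  with Cons show ?case
    by (auto simp: part_Cons_Suc)
qed simp

lemma epochP_ratio_at_q_power_eq_0:
  assumes "norm p < 1" "q \<noteq> 0" "part mu 1 \<le> int x" "int x < part lam 1"
  shows "epochP_ratio q p t (1 / q powi int x) lam mu = 0"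
proof -
  define c where "c = q powi (part mu 1 - int x)"
  have "c * q ^ nat (int x - part mu 1) = 1"
    unfolding c_def using assms(2,3)
    by (simp add: power_int_of_nat[symmetric] power_int_add[symmetric])
  moreover have "nat (int x - part mu 1) < nat (part lam 1 - part mu 1)"
    using assms(3,4) by simp
  ultimately have "epoch q p c (part lam 1 - part mu 1) = 0"
    using assms(3,4) ellE_1[OF assms(1)] part_nonneg[of mu 1]
    by (auto simp: epoch_def intro!: prod_zero bexI[of _ "nat (int x - part mu 1)"])
  moreover have "1 / q powi int x * t powi (1 - int 1) * q powi part mu 1 = c"
    unfolding c_def using assms(2) by (simp add: power_int_diff field_simps)
  moreover have "1 \<le> length lam"
    using assms(4) by (cases lam) (auto simp: part_def)
  ultimately show ?thesis
    unfolding epochP_ratio_def by (intro prod_zero) (auto intro: bexI[of _ 1])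
qed

lemma Wm_spectral_nonzero_imp_part_le:
  assumes "norm p < 1" "q \<noteq> 0" "t \<noteq> 0" "sorted_wrt (\<ge>) mu"
    and "Wm q p t nu (replicate N 0) (spectral_vector q t mu) a b \<noteq> 0"
  shows "part nu i \<le> part mu i"
  using assms(4,5)
proof (induction mu arbitrary: nu i)
  case Nil
  then show ?case by (auto split: if_splits)
next
  case (Cons x xs)
  let ?l = "int (length xs)"
  have y: "q powi int x * t powi ?l * t powi (- ?l) = q powi int x"
    using assms(3) by (simp add: power_int_minus field_simps)
  from Cons.prems(2) have "(\<Sum>kap\<in>{kap. interlace nu kap}.
      W1 q p t nu kap (q powi int x) (a * t powi (2 * ?l)) (b * t powi ?l)
      * Wm q p t kap (replicate N 0) (spectral_vector q t xs) a b) \<noteq> 0"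
    unfolding spectral_vector.simps Wm_Cons length_spectral_vector y .
  then obtain kap where kap: "interlace nu kap"
      "W1 q p t nu kap (q powi int x) (a * t powi (2 * ?l)) (b * t powi ?l) \<noteq> 0"
      "Wm q p t kap (replicate N 0) (spectral_vector q t xs) a b \<noteq> 0"
    by (auto elim: sum.not_neutral_contains_not_neutral)
  have "sorted_wrt (\<ge>) xs"
    using Cons.prems(1) by simp
  note IH = Cons.IH[OF this kap(3)]
  consider "i = 0" | "i = 1" | j where "i = Suc j" "1 \<le> j"
    by (cases i) (auto simp: Suc_le_eq)
  then show ?case
  proof cases
    case 2
    show ?thesis
    proof (rule ccontr)
      assume "\<not> part nu i \<le> part (x # xs) i"
      moreover have "part kap 1 \<le> int x"
        using IH[of 1] part_le_hd[OF Cons.prems(1)] by (rule order_trans)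
      ultimately have "epochP_ratio q p t (1 / q powi int x) nu kap = 0"
        using 2 assms(1,2) by (intro epochP_ratio_at_q_power_eq_0) auto
      then have "W1 q p t nu kap (q powi int x) (a * t powi (2 * ?l)) (b * t powi ?l) = 0"
        by (simp add: W1_def Let_def)
      with kap(2) show False ..
    qed
  next
    case 3
    then have "part nu i \<le> part kap j"
      using kap(1) by (simp add: interlace_iff_part)
    also have "\<dots> \<le> part (x # xs) i"
      using IH[of j] 3 by (simp add: part_Cons_Suc)
    finally show ?thesis .
  qed simp
qed

section \<open>The right-hand side and its recursion\<close>

definition diag_factor :: "complex \<Rightarrow> complex \<Rightarrow> complex \<Rightarrow> complex \<Rightarrow> complex \<Rightarrow> int \<Rightarrow> int \<Rightarrow> int \<Rightarrow> complex" where
  "diag_factor q p t a b n k l =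
     (epoch q p (q * b * t powi (n - k)) l * epoch q p (q * t powi (n - k)) l
      * epoch q p (a * t powi (2 * n - 2 * k)) (2 * l))
     / (epoch q p ((a / b) * t powi (n - k)) l * epoch q p (a * t powi (n - k)) l
        * epoch q p (q * b * t powi (n + 1 - 2 * k)) (2 * l))
     * t powi ((n + 1 - 2 * k) * l)"

definition pair_factor :: "complex \<Rightarrow> complex \<Rightarrow> complex \<Rightarrow> complex \<Rightarrow> int \<Rightarrow> int \<Rightarrow> int \<Rightarrow> int \<Rightarrow> int \<Rightarrow> complex" where
  "pair_factor q p t a n i j li lj =
     (epoch q p (q * t powi (j - i - 1)) (li - lj) * epoch q p (a * t powi (2 * n - i - j)) (li + lj))
     / (epoch q p (q * t powi (j - i)) (li - lj) * epoch q p (a * t powi (1 + 2 * n - i - j)) (li + lj))"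

definition principal_value :: "complex \<Rightarrow> complex \<Rightarrow> complex \<Rightarrow> complex \<Rightarrow> complex \<Rightarrow> nat list \<Rightarrow> complex" where
  "principal_value q p t a b lam = (let n = length lam; L = part lam in
     (\<Prod>k\<in>{1..n}. diag_factor q p t a b (int n) (int k) (L k))
     * (a / (q * b)) ^ sum_list lam
     * (\<Prod>i\<in>{1..n}. \<Prod>j\<in>{i+1..n}. pair_factor q p t a (int n) (int i) (int j) (L i) (L j)))"

definition principal_ratio :: "complex \<Rightarrow> complex \<Rightarrow> complex \<Rightarrow> complex \<Rightarrow> complex \<Rightarrow> nat \<Rightarrow> nat list \<Rightarrow> complex" where
  "principal_ratio q p t a b x xs = (let m = int (length xs); L = part xs; P = epoch q p in
     diag_factor q p t a b (m + 1) 1 (int x) * (a / (q * b)) ^ x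
     * (\<Prod>k\<in>{1..length xs}. P (q * t powi (int k - 1)) (int x - L k) / P (q * t powi int k) (int x - L k))
     * (\<Prod>k\<in>{1..length xs}. P (a * t powi (2 * m - int k)) (int x + L k)
                              / P (a * t powi (2 * m + 1 - int k)) (int x + L k))
     * (\<Prod>k\<in>{1..length xs}. P (q * b * t powi (m + 1 - 2 * int k)) (2 * L k)
                              / P (q * b * t powi (m - 2 * int k)) (2 * L k))
     * (\<Prod>k\<in>{1..length xs}. t powi (- L k)))"

lemma pair_factor_Suc:
  "pair_factor q p t a (n + 1) (i + 1) (j + 1) li lj = pair_factor q p t a n i j li lj"
  by (simp add: pair_factor_def algebra_simps)

lemma diag_factor_first_row:
  "diag_factor q p t a b (k + 1) 1 (int x)
   = epoch q p (q * b * t powi k) (int x) * epoch q p (q * t powi k) (int x)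
     * epoch q p (a * t powi (2 * k)) (2 * int x)
     / (epoch q p (a / b * t powi k) (int x) * epoch q p (a * t powi k) (int x)
        * (epoch q p (q * b * t powi k) (int x) * epoch q p (q * b * t powi k * q powi int x) (int x)))
     * t powi (k * int x)"
proof -
  have "epoch q p c (2 * int x) = epoch q p c (int x) * epoch q p (c * q powi int x) (int x)" for c
    using epoch_add[of "int x" "int x" q p c] by (simp only: mult_2)
  then show ?thesis
    by (simp add: diag_factor_def)
qed

context generic_elliptic
begin

lemma diag_factor_Suc:
  "diag_factor q p t a b (n + 1) (k + 1) l
   = diag_factor q p t a b n k l
     * (epoch q p (q * b * t powi (n + 1 - 2 * k)) (2 * l) / epoch q p (q * b * t powi (n - 2 * k)) (2 * l))
     * t powi (- l)"
proof -
  have "epoch q p (q * b * t powi (n + 1 - 2 * k)) (2 * l) \<noteq> 0"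
    by (rule epoch_monomial_nonzero[where \<alpha> = 1 and \<beta> = "n + 1 - 2 * k" and \<gamma> = 0 and \<delta> = 1])
      (auto simp: qtab_monomial_def mult_ac)
  moreover have "t powi ((n - 2 * k) * l) = t powi ((n + 1 - 2 * k) * l) * t powi (- l)"
    using t_nonzero by (simp add: power_int_add[symmetric] algebra_simps)
  ultimately show ?thesis
    by (simp add: diag_factor_def algebra_simps)
qed

lemma prod_diag_factor_Cons:
  "(\<Prod>k\<in>{1..Suc m}. diag_factor q p t a b (int (Suc m)) (int k) (part (x # xs) k))
   = diag_factor q p t a b (int m + 1) 1 (int x)
     * (\<Prod>k\<in>{1..m}. diag_factor q p t a b (int m) (int k) (part xs k))
     * (\<Prod>k\<in>{1..m}. epoch q p (q * b * t powi (int m + 1 - 2 * int k)) (2 * part xs k)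
                      / epoch q p (q * b * t powi (int m - 2 * int k)) (2 * part xs k))
     * (\<Prod>k\<in>{1..m}. t powi (- part xs k))"
proof -
  have "diag_factor q p t a b (int (Suc m)) (int (Suc k)) (part (x # xs) (Suc k))
      = diag_factor q p t a b (int m) (int k) (part xs k)
        * (epoch q p (q * b * t powi (int m + 1 - 2 * int k)) (2 * part xs k)
           / epoch q p (q * b * t powi (int m - 2 * int k)) (2 * part xs k)
           * t powi (- part xs k))" if "k \<in> {1..m}" for k
  proof -
    have "int (Suc m) = int m + 1" "int (Suc k) = int k + 1" "part (x # xs) (Suc k) = part xs k"
      using that by (simp_all add: part_Cons_Suc)
    then show ?thesis
      using diag_factor_Suc[of "int m" "int k" "part xs k"] by (simp only: mult.assoc)
  qed
  then have "(\<Prod>k\<in>{1..m}. diag_factor q p t a b (int (Suc m)) (int (Suc k)) (part (x # xs) (Suc k)))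
    = (\<Prod>k\<in>{1..m}. diag_factor q p t a b (int m) (int k) (part xs k)
        * (epoch q p (q * b * t powi (int m + 1 - 2 * int k)) (2 * part xs k)
           / epoch q p (q * b * t powi (int m - 2 * int k)) (2 * part xs k)
           * t powi (- part xs k)))"
    by (rule prod.cong[OF refl])
  then show ?thesis
    unfolding prod_atLeastAtMost_Suc_split_first prod.distrib mult.assoc by (simp add: add.commute)
qed

lemma prod_pair_factor_Cons:
  "(\<Prod>i\<in>{1..Suc m}. \<Prod>j\<in>{i+1..Suc m}.
      pair_factor q p t a (int (Suc m)) (int i) (int j) (part (x # xs) i) (part (x # xs) j))
   = (\<Prod>k\<in>{1..m}. epoch q p (q * t powi (int k - 1)) (int x - part xs k)
                   / epoch q p (q * t powi int k) (int x - part xs k))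
     * (\<Prod>k\<in>{1..m}. epoch q p (a * t powi (2 * int m - int k)) (int x + part xs k)
                      / epoch q p (a * t powi (2 * int m + 1 - int k)) (int x + part xs k))
     * (\<Prod>i\<in>{1..m}. \<Prod>j\<in>{i+1..m}. pair_factor q p t a (int m) (int i) (int j) (part xs i) (part xs j))"
proof -
  have first_row: "pair_factor q p t a (int (Suc m)) 1 (int (Suc k)) (int x) (part (x # xs) (Suc k))
      = epoch q p (q * t powi (int k - 1)) (int x - part xs k)
          / epoch q p (q * t powi int k) (int x - part xs k)
        * (epoch q p (a * t powi (2 * int m - int k)) (int x + part xs k)
           / epoch q p (a * t powi (2 * int m + 1 - int k)) (int x + part xs k))"
    if "k \<in> {1..m}" for k
    using that by (simp add: pair_factor_def part_Cons_Suc algebra_simps)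
  have other_rows: "pair_factor q p t a (int (Suc m)) (int (Suc i)) (int (Suc j))
        (part (x # xs) (Suc i)) (part (x # xs) (Suc j))
      = pair_factor q p t a (int m) (int i) (int j) (part xs i) (part xs j)"
    if "i \<in> {1..m}" "j \<in> {i+1..m}" for i j
    using pair_factor_Suc[of q p t a "int m" "int i" "int j"] that by (simp add: part_Cons_Suc add_ac)
  show ?thesis
    unfolding prod_triangle_Suc_split_first prod.distrib[symmetric]
    using first_row other_rows by (intro arg_cong2[where f = "(*)"] prod.cong refl) simp_all
qed

lemma principal_value_Cons:
  "principal_value q p t a b (x # xs) = principal_ratio q p t a b x xs * principal_value q p t a b xs"
  unfolding principal_value_def principal_ratio_def Let_def length_Cons
    prod_diag_factor_Cons prod_pair_factor_Cons
  by (simp add: prod.distrib power_add mult_ac)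

end

section \<open>One branching step at the spectral vector\<close>

locale branching_step = generic_elliptic +
  fixes x :: nat and xs :: "nat list" and N :: nat
  assumes sorted: "sorted_wrt (\<ge>) (x # xs)" and length_le: "length (x # xs) \<le> N"
begin

definition "m = length xs"
definition "nu = (x # xs) @ replicate (N - length (x # xs)) 0"
definition "kap = xs @ replicate (N - length xs) 0"
definition "L = part (x # xs)"

lemma Suc_m_le_N: "Suc m \<le> N"
  using length_le by (simp add: m_def)

lemma length_nu: "length nu = N" and length_kap: "length kap = N"
  using length_le by (simp_all add: nu_def kap_def)

lemma part_nu: "part nu i = L i"
  by (simp add: nu_def L_def del: append.simps)

lemma part_kap: "1 \<le> i \<Longrightarrow> part kap i = L (Suc i)"
  by (simp add: kap_def L_def part_Cons_Suc)

lemma L_1 [simp]: "L (Suc 0) = int x"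
  by (simp add: L_def)

lemma L_nonneg [simp]: "0 \<le> L i"
  by (simp add: L_def)

lemma L_Suc: "1 \<le> k \<Longrightarrow> L (Suc k) = part xs k"
  by (simp add: L_def part_Cons_Suc)

lemma L_beyond: "Suc m < i \<Longrightarrow> L i = 0"
  by (simp add: L_def m_def part_beyond)

lemma L_Suc_le: "1 \<le> i \<Longrightarrow> L (Suc i) \<le> L i"
  unfolding L_def by (rule part_Suc_le[OF sorted])

lemma L_le_x: "L i \<le> int x"
  using part_le_hd[OF sorted, of "i - 1"] by (cases i) (auto simp: L_def part_def nth_Cons')

lemma interlace_nu_kap: "interlace nu kap"
  by (simp add: interlace_iff_part length_nu length_kap part_nu part_kap L_Suc_le)

lemma Hfac_nu_kap: "Hfac q p t b' nu kap = 1"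
  by (rule Hfac_eq_1) (simp add: part_nu part_kap)

lemma epochP_nu:
  "epochP q p t c nu = epoch q p c (int x) * epochP q p t (c / t) kap"
proof -
  define f where "f i = epoch q p (c * t powi (1 - int i)) (L i)" for i
  have "epochP q p t c nu = (\<Prod>i\<in>{1..N}. f i)"
    unfolding epochP_def length_nu f_def part_nu ..
  also have "\<dots> = f 1 * (\<Prod>i\<in>{1..N}. f (Suc i))"
  proof -
    obtain N' where N: "N = Suc N'"
      using Suc_m_le_N by (cases N) auto
    have "f (Suc N) = 1"
      using L_beyond[of "Suc N"] Suc_m_le_N by (simp add: f_def)
    then show ?thesis
      unfolding N prod_atLeastAtMost_Suc_split_first[of f] by (simp add: atLeastAtMostSuc_conv)
  qed
  also have "(\<Prod>i\<in>{1..N}. f (Suc i)) = epochP q p t (c / t) kap"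
    unfolding epochP_def length_kap
  proof (rule prod.cong[OF refl])
    fix i assume "i \<in> {1..N}"
    moreover have "c / t * t powi (1 - int i) = c * t powi (1 - int (Suc i))"
      using t_nonzero by (simp add: power_int_diff power_int_minus field_simps)
    ultimately show "f (Suc i) = epoch q p (c / t * t powi (1 - int i)) (part kap i)"
      by (simp add: f_def part_kap)
  qed
  finally show ?thesis
    by (simp add: f_def)
qed

lemma epochP_ratio_nu_kap:
  "epochP_ratio q p t c nu kap
   = (\<Prod>i\<in>{1..Suc m}. epoch q p (c * t powi (1 - int i) * q powi L (Suc i)) (L i - L (Suc i)))"
  (is "_ = ?rhs")
proof -
  have "epochP_ratio q p t c nu kap
      = (\<Prod>i\<in>{1..N}. epoch q p (c * t powi (1 - int i) * q powi L (Suc i)) (L i - L (Suc i)))"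
    unfolding epochP_ratio_def length_nu part_nu by (intro prod.cong) (auto simp: part_kap)
  also have "\<dots> = ?rhs"
    using Suc_m_le_N L_beyond by (intro prod_atLeastAtMost_cut) auto
  finally show ?thesis .
qed

lemma epochP_ratio_nu_kap_at_a:
  "epochP_ratio q p t (a * t powi (2 * int m) * q powi int x) nu kap
   = epoch q p (a * t powi (2 * int m)) (2 * int x) / epoch q p (a * t powi int m) (int x)
     * (\<Prod>k\<in>{1..m}. epoch q p (a * t powi (2 * int m - int k)) (int x + part xs k)
                     / epoch q p (a * t powi (2 * int m + 1 - int k)) (int x + part xs k))"
proof -
  define c where "c i = a * t powi (2 * int m + 1 - int i)" for i
  have factor: "epoch q p (a * t powi (2 * int m) * q powi int x * t powi (1 - int i) * q powi L (Suc i))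
        (L i - L (Suc i))
      = epoch q p (c i) (int x + L i) / epoch q p (c i) (int x + L (Suc i))" if "i \<in> {1..Suc m}" for i
  proof -
    have "epoch q p (c i) (int x + L (Suc i)) \<noteq> 0"
      by (rule epoch_monomial_nonzero[where \<alpha> = 0 and \<beta> = "2 * int m + 1 - int i" and \<gamma> = 1 and \<delta> = 0])
        (simp_all add: c_def qtab_monomial_def)
    moreover have "c i * q powi (int x + L (Suc i))
        = a * t powi (2 * int m) * q powi int x * t powi (1 - int i) * q powi L (Suc i)"
      using q_nonzero t_nonzero by (simp add: c_def power_int_add power_int_diff mult_ac)
    ultimately show ?thesis
      using epoch_shift_eq_div[of "int x + L (Suc i)" "L i - L (Suc i)" q p "c i"] L_Suc_le[of i] that
      by simp
  qed
  have "epochP_ratio q p t (a * t powi (2 * int m) * q powi int x) nu kap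
      = (\<Prod>i\<in>{1..Suc m}. epoch q p (c i) (int x + L i) / epoch q p (c i) (int x + L (Suc i)))"
    unfolding epochP_ratio_nu_kap by (rule prod.cong[OF refl factor])
  also have "\<dots> = epoch q p (c 1) (int x + L 1) / epoch q p (c (Suc m)) (int x + L (Suc (Suc m)))
      * (\<Prod>k\<in>{1..m}. epoch q p (c (Suc k)) (int x + L (Suc k)) / epoch q p (c k) (int x + L (Suc k)))"
    by (rule prod_telescope_ratio_up)
  also have "epoch q p (c 1) (int x + L 1) = epoch q p (a * t powi (2 * int m)) (2 * int x)"
    by (simp add: c_def)
  also have "epoch q p (c (Suc m)) (int x + L (Suc (Suc m))) = epoch q p (a * t powi int m) (int x)"
    using L_beyond[of "Suc (Suc m)"] by (simp add: c_def)
  also have "(\<Prod>k\<in>{1..m}. epoch q p (c (Suc k)) (int x + L (Suc k)) / epoch q p (c k) (int x + L (Suc k)))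
      = (\<Prod>k\<in>{1..m}. epoch q p (a * t powi (2 * int m - int k)) (int x + part xs k)
                     / epoch q p (a * t powi (2 * int m + 1 - int k)) (int x + part xs k))"
    by (rule prod.cong[OF refl]) (simp add: c_def L_Suc algebra_simps)
  finally show ?thesis .
qed

lemma epochP_ratio_nu_kap_at_inverse_factor:
  assumes "i \<in> {1..Suc m}"
  shows "epoch q p (1 / q powi int x * t powi (1 - int i) * q powi L (Suc i)) (L i - L (Suc i))
    = neg_q_inverse_prod q (nat (int x - L (Suc i))) / neg_q_inverse_prod q (nat (int x - L i))
      * t powi ((1 - int i) * (L i - L (Suc i)))
      * (epoch q p (q * t powi (int i - 1)) (int x - L (Suc i))
         / epoch q p (q * t powi (int i - 1)) (int x - L i))"
proof -
  define s where "s = nat (int x - L i)"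
  define d where "d = nat (L i - L (Suc i))"
  define u where "u = t powi (int i - 1)"
  have s: "int s = int x - L i" and sd: "int (s + d) = int x - L (Suc i)" and d: "int d = L i - L (Suc i)"
    using L_le_x[of i] L_Suc_le[of i] assms by (simp_all add: s_def d_def)
  have "u \<noteq> 0"
    using t_nonzero by (simp add: u_def)
  have "epoch q p (q * u) (int s) \<noteq> 0"
  proof (cases "i = 1")
    case True
    then show ?thesis by (simp add: s_def)
  next
    case False
    with assms show ?thesis
      by (intro epoch_monomial_nonzero[where \<alpha> = 1 and \<beta> = "int i - 1" and \<gamma> = 0 and \<delta> = 0])
        (auto simp: u_def qtab_monomial_def)
  qed
  note reflect = epoch_q_power_reflect[OF nome q_nonzero \<open>u \<noteq> 0\<close> this, of d]
  have arg: "1 / q powi int x * t powi (1 - int i) * q powi L (Suc i) = q powi (- int (s + d)) / u"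
    unfolding sd u_def using q_nonzero t_nonzero by (simp add: power_int_diff field_simps)
  have "1 / u = t powi (1 - int i)"
    unfolding u_def using t_nonzero by (simp add: power_int_diff)
  then have u_power: "(1 / u) ^ d = t powi ((1 - int i) * int d)"
    by (simp add: power_int_power')
  have "s + d = nat (int x - L (Suc i))"
    using sd by simp
  then show ?thesis
    unfolding arg d[symmetric] reflect unfolding sd s u_power unfolding u_def s_def by simp
qed

lemma prod_t_power_differences:
  "(\<Prod>i\<in>{1..Suc m}. t powi ((1 - int i) * (L i - L (Suc i)))) = (\<Prod>k\<in>{1..m}. t powi (- part xs k))"
proof -
  have "(\<Sum>i\<in>{1..Suc m}. (1 - int i) * (L i - L (Suc i)))
      = - (\<Sum>i\<in>{1..Suc m}. (int i - 1) * (L i - L (Suc i)))"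
    unfolding sum_negf[symmetric] by (rule sum.cong[OF refl]) (simp add: algebra_simps)
  also have "\<dots> = (\<Sum>k\<in>{1..m}. - L (Suc k))"
    unfolding sum_weighted_differences using L_beyond[of "Suc (Suc m)"] by (simp add: sum_negf)
  also have "\<dots> = (\<Sum>k\<in>{1..m}. - part xs k)"
    by (rule sum.cong[OF refl]) (simp add: L_Suc)
  finally show ?thesis
    by (simp only: prod_power_int[OF t_nonzero])
qed

lemma epochP_ratio_nu_kap_at_inverse:
  "epochP_ratio q p t (1 / q powi int x) nu kap
   = neg_q_inverse_prod q x * (\<Prod>k\<in>{1..m}. t powi (- part xs k)) * epoch q p (q * t powi int m) (int x)
     * (\<Prod>k\<in>{1..m}. epoch q p (q * t powi (int k - 1)) (int x - part xs k)
                     / epoch q p (q * t powi int k) (int x - part xs k))"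
proof -
  define g where "g i = neg_q_inverse_prod q (nat (int x - L (Suc i)))" for i
  define h where "h i = neg_q_inverse_prod q (nat (int x - L i))" for i
  define g' where "g' i = epoch q p (q * t powi (int i - 1)) (int x - L (Suc i))" for i
  define h' where "h' i = epoch q p (q * t powi (int i - 1)) (int x - L i)" for i
  have "epochP_ratio q p t (1 / q powi int x) nu kap
      = (\<Prod>i\<in>{1..Suc m}. g i / h i * t powi ((1 - int i) * (L i - L (Suc i))) * (g' i / h' i))"
    unfolding epochP_ratio_nu_kap g_def h_def g'_def h'_def
    by (rule prod.cong[OF refl epochP_ratio_nu_kap_at_inverse_factor])
  also have "\<dots> = (\<Prod>i\<in>{1..Suc m}. g i / h i) * (\<Prod>k\<in>{1..m}. t powi (- part xs k))
      * (\<Prod>i\<in>{1..Suc m}. g' i / h' i)"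
    by (simp only: prod.distrib prod_t_power_differences)
  also have "(\<Prod>i\<in>{1..Suc m}. g i / h i) = neg_q_inverse_prod q x"
    unfolding prod_telescope_ratio_down
    using L_beyond[of "Suc (Suc m)"] neg_q_inverse_prod_nonzero[OF q_nonzero]
    by (simp add: g_def h_def neg_q_inverse_prod_def)
  also have "(\<Prod>i\<in>{1..Suc m}. g' i / h' i) = epoch q p (q * t powi int m) (int x)
     * (\<Prod>k\<in>{1..m}. epoch q p (q * t powi (int k - 1)) (int x - part xs k)
                     / epoch q p (q * t powi int k) (int x - part xs k))"
  proof -
    have "(\<Prod>k\<in>{1..m}. g' k / h' (Suc k))
        = (\<Prod>k\<in>{1..m}. epoch q p (q * t powi (int k - 1)) (int x - part xs k)
                       / epoch q p (q * t powi int k) (int x - part xs k))"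
      by (rule prod.cong[OF refl]) (simp add: g'_def h'_def L_Suc)
    moreover have "g' (Suc m) = epoch q p (q * t powi int m) (int x)"
      using L_beyond[of "Suc (Suc m)"] by (simp add: g'_def)
    ultimately show ?thesis
      unfolding prod_telescope_ratio_down by (simp add: h'_def)
  qed
  finally show ?thesis
    by (simp only: mult_ac)
qed

lemma W1_weight_nu_kap_factor:
  "ellE p (b * t powi int m * t powi (1 - 2 * int i) * q powi (2 * L (Suc i)))
     / ellE p (b * t powi int m * t powi (1 - 2 * int i))
   * epoch q p (b * t powi int m * t powi (1 - 2 * int i)) (L (Suc i) + L (Suc i))
   / epoch q p (b * t powi int m * q * t powi (- 2 * int i)) (L (Suc i) + L (Suc i))
   * t powi (int i * (L (Suc i) - L (Suc i)))
   = epoch q p (q * b * t powi (int m + 1 - 2 * int i)) (2 * L (Suc i))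
     / epoch q p (q * b * t powi (int m - 2 * int i)) (2 * L (Suc i))"
proof -
  define y where "y = b * t powi int m * t powi (1 - 2 * int i)"
  define n where "n = nat (2 * L (Suc i))"
  have y: "y = b * t powi (int m + 1 - 2 * int i)"
    using t_powi_split[of "int m + 1 - 2 * int i" "int m" "1 - 2 * int i"] by (simp add: y_def)
  have "ellE p y \<noteq> 0"
    by (rule ellE_monomial_nonzero[where \<alpha> = 0 and \<beta> = "int m + 1 - 2 * int i" and \<gamma> = 0 and \<delta> = 1])
      (simp_all add: y qtab_monomial_def)
  moreover have "epoch q p y (int n) * ellE p (y * q ^ n) = ellE p y * epoch q p (y * q) (int n)"
    by (rule epoch_shift_nat)
  moreover have "int n = L (Suc i) + L (Suc i)" "q ^ n = q powi (2 * L (Suc i))"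
    by (simp_all add: n_def power_int_nonneg_exp)
  ultimately have shift: "ellE p (y * q powi (2 * L (Suc i))) / ellE p y * epoch q p y (L (Suc i) + L (Suc i))
      = epoch q p (y * q) (2 * L (Suc i))"
    by (simp add: field_simps)
  have yq: "y * q = q * b * t powi (int m + 1 - 2 * int i)"
    and bq: "b * t powi int m * q * t powi (- 2 * int i) = q * b * t powi (int m - 2 * int i)"
    using t_powi_split[of "int m - 2 * int i" "int m" "- 2 * int i"] by (simp_all add: y mult_ac)
  show ?thesis
    unfolding y_def[symmetric] shift yq bq by simp
qed

lemma W1_weight_nu_kap:
  "W1_weight q p t (b * t powi int m) nu kap
   = (\<Prod>k\<in>{1..m}. epoch q p (q * b * t powi (int m + 1 - 2 * int k)) (2 * part xs k)
                   / epoch q p (q * b * t powi (int m - 2 * int k)) (2 * part xs k))"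
proof -
  define f where "f i = epoch q p (q * b * t powi (int m + 1 - 2 * int i)) (2 * L (Suc i))
    / epoch q p (q * b * t powi (int m - 2 * int i)) (2 * L (Suc i))" for i
  have "W1_weight q p t (b * t powi int m) nu kap = (\<Prod>i\<in>{1..N}. f i)"
    unfolding W1_weight_def Let_def length_nu f_def
    by (rule prod.cong[OF refl]) (simp add: part_kap part_nu W1_weight_nu_kap_factor[simplified])
  also have "\<dots> = (\<Prod>i\<in>{1..m}. f i)"
    using Suc_m_le_N L_beyond by (intro prod_atLeastAtMost_cut) (auto simp: f_def)
  also have "\<dots> = (\<Prod>k\<in>{1..m}. epoch q p (q * b * t powi (int m + 1 - 2 * int k)) (2 * part xs k)
                   / epoch q p (q * b * t powi (int m - 2 * int k)) (2 * part xs k))"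
    by (rule prod.cong[OF refl]) (simp add: f_def L_Suc)
  finally show ?thesis .
qed

lemma W1_nu_kap_factors:
  "W1 q p t nu kap (q powi int x) (a * t powi (2 * int m)) (b * t powi int m)
   = epochP_ratio q p t (1 / q powi int x) nu kap
     * epochP_ratio q p t (a * t powi (2 * int m) * q powi int x) nu kap
     / (epoch q p (q * b * t powi int m * q powi int x) (int x)
        * epoch q p (q * b / (a * t powi int m * q powi int x)) (int x))
     * W1_weight q p t (b * t powi int m) nu kap"
proof -
  define c1 where "c1 = q * (b * t powi int m) * q powi int x"
  define c2 where "c2 = q * (b * t powi int m) / (a * t powi (2 * int m) * q powi int x)"
  have "epochP q p t (c1 / t) kap \<noteq> 0"
    using q_nonzero t_nonzero
    by (intro epochP_monomial_nonzero[where \<alpha> = "1 + int x" and \<beta> = "int m - 1" and \<gamma> = 0 and \<delta> = 1])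
      (simp_all add: c1_def qtab_monomial_def power_int_add power_int_diff field_simps)
  moreover have "epochP q p t (c2 / t) kap \<noteq> 0"
    using q_nonzero t_nonzero a_nonzero t_powi_split[of "2 * int m" "int m" "int m"]
    by (intro epochP_monomial_nonzero[where \<alpha> = "1 - int x" and \<beta> = "- int m - 1" and \<gamma> = "-1" and \<delta> = 1])
      (simp_all add: c2_def qtab_monomial_def power_int_add power_int_diff power_int_minus field_simps)
  moreover have "c1 = q * b * t powi int m * q powi int x"
    by (simp add: c1_def mult.assoc)
  moreover have "c2 = q * b / (a * t powi int m * q powi int x)"
    using t_powi_split[of "2 * int m" "int m" "int m"] t_nonzero by (simp add: c2_def)
  moreover have "q * (b * t powi int m) / (a * t powi (2 * int m) * q powi int x * t) = c2 / t"
    by (simp add: c2_def)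
  moreover have "R1 * R2 * (K1 * K2) / ((E1 * K1) * (E2 * K2)) * S = R1 * R2 / (E1 * E2) * S"
    if "K1 \<noteq> 0" "K2 \<noteq> 0" for R1 R2 K1 K2 E1 E2 S :: complex
    using that by (simp add: field_simps)
  ultimately show ?thesis
    unfolding W1_interlace[OF interlace_nu_kap] Hfac_nu_kap mult_1_left c1_def[symmetric] c2_def[symmetric]
      epochP_nu[of c1] epochP_nu[of c2]
    by simp
qed

lemma W1_nu_kap_eq_principal_ratio:
  "W1 q p t nu kap (q powi int x) (a * t powi (2 * int m)) (b * t powi int m) = principal_ratio q p t a b x xs"
proof -
  define w where "w = a / b * t powi int m"
  define G where "G = (\<Prod>r<x. - (1 / (w * q ^ r)))"
  have "w \<noteq> 0"
    using a_nonzero b_nonzero t_nonzero by (simp add: w_def)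
  have "q * b / (a * t powi int m * q powi int x) = q powi (1 - int x) / w"
    using q_nonzero b_nonzero by (simp add: w_def power_int_diff field_simps)
  then have reflect: "epoch q p (q * b / (a * t powi int m * q powi int x)) (int x) = G * epoch q p w (int x)"
    unfolding G_def using epoch_reflect[OF nome q_nonzero \<open>w \<noteq> 0\<close>] by simp
  have "w / q = a / (q * b) * t powi int m"
    by (simp add: w_def)
  then have sign: "neg_q_inverse_prod q x = (a / (q * b)) ^ x * t powi (int m * int x) * G"
    unfolding neg_q_inverse_prod_scaled[OF \<open>w \<noteq> 0\<close>] G_def by (simp only: power_mult_distrib power_int_power')
  \<comment> \<open>after the substitutions below, \<open>G\<close> and \<open>(q b t^m)\<^sub>x\<close> cancel\<close>
  have field: "(d * c * G * T * Eqt * P1) * (EA2 / EAt * P2) / (Eqbx * (G * Ew)) * P3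
      = Eqb * Eqt * EA2 / (Ew * EAt * (Eqb * Eqbx)) * c * d * P1 * P2 * P3 * T"
    if "Eqb \<noteq> 0" "EAt \<noteq> 0" "Eqbx \<noteq> 0" "Ew \<noteq> 0" "G \<noteq> 0"
    for d c G T Eqt P1 EA2 EAt P2 Eqbx Ew P3 Eqb :: complex
    using that by (simp add: field_simps)
  show ?thesis
    unfolding W1_nu_kap_factors epochP_ratio_nu_kap_at_inverse epochP_ratio_nu_kap_at_a W1_weight_nu_kap
      reflect sign principal_ratio_def Let_def m_def[symmetric] diag_factor_first_row w_def[symmetric]
  proof (rule field)
    show "epoch q p (q * b * t powi int m) (int x) \<noteq> 0"
      by (rule epoch_monomial_nonzero[where \<alpha> = 1 and \<beta> = "int m" and \<gamma> = 0 and \<delta> = 1])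
        (simp_all add: qtab_monomial_def mult_ac)
    show "epoch q p (a * t powi int m) (int x) \<noteq> 0"
      by (rule epoch_monomial_nonzero[where \<alpha> = 0 and \<beta> = "int m" and \<gamma> = 1 and \<delta> = 0])
        (simp_all add: qtab_monomial_def mult_ac)
    show "epoch q p (q * b * t powi int m * q powi int x) (int x) \<noteq> 0"
      using q_nonzero
      by (intro epoch_monomial_nonzero[where \<alpha> = "1 + int x" and \<beta> = "int m" and \<gamma> = 0 and \<delta> = 1])
        (simp_all add: qtab_monomial_def power_int_add mult_ac)
    show "epoch q p w (int x) \<noteq> 0"
      using b_nonzero
      by (intro epoch_monomial_nonzero[where \<alpha> = 0 and \<beta> = "int m" and \<gamma> = 1 and \<delta> = "-1"])
        (simp_all add: qtab_monomial_def w_def power_int_minus field_simps)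
    show "G \<noteq> 0"
      using \<open>w \<noteq> 0\<close> q_nonzero by (simp add: G_def prod_zero_iff)
  qed
qed

end

context generic_elliptic
begin

lemma Wm_spectral_vector_eq_principal_value:
  assumes "sorted_wrt (\<ge>) mu" "length mu \<le> N"
  shows "Wm q p t (mu @ replicate (N - length mu) 0) (replicate N 0) (spectral_vector q t mu) a b
    = principal_value q p t a b mu"
  using assms
proof (induction mu)
  case Nil
  then show ?case
    by (simp add: principal_value_def)
next
  case (Cons x xs)
  interpret branching_step q p t a b x xs N
    using Cons.prems by unfold_locales
  let ?l = "int (length xs)"
  let ?f = "\<lambda>\<kappa>. W1 q p t nu \<kappa> (q powi int x) (a * t powi (2 * ?l)) (b * t powi ?l)
      * Wm q p t \<kappa> (replicate N 0) (spectral_vector q t xs) a b"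
  have only_kap: "?f \<kappa> = 0" if "interlace nu \<kappa>" "\<kappa> \<noteq> kap" for \<kappa>
  proof (rule ccontr)
    assume "?f \<kappa> \<noteq> 0"
    then have "Wm q p t \<kappa> (replicate N 0) (spectral_vector q t xs) a b \<noteq> 0"
      by auto
    then have "part \<kappa> i \<le> part xs i" for i
      using Cons.prems(1) by (intro Wm_spectral_nonzero_imp_part_le[OF nome q_nonzero t_nonzero]) auto
    with that(1) have "\<kappa> = kap"
      by (intro list_eq_by_part) (auto simp: interlace_iff_part length_nu length_kap part_nu part_kap
        L_Suc intro: order.antisym)
    with that(2) show False ..
  qed
  have y: "q powi int x * t powi ?l * t powi (- ?l) = q powi int x"
    using t_nonzero by (simp add: power_int_minus field_simps)
  have "Wm q p t nu (replicate N 0) (spectral_vector q t (x # xs)) a b = (\<Sum>\<kappa>\<in>{\<kappa>. interlace nu \<kappa>}. ?f \<kappa>)"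
    unfolding spectral_vector.simps Wm_Cons length_spectral_vector y ..
  also have "\<dots> = ?f kap"
    using finite_interlace[of nu] interlace_nu_kap only_kap
    by (subst sum.mono_neutral_right[where S = "{kap}"]) auto
  also have "\<dots> = principal_ratio q p t a b x xs * principal_value q p t a b xs"
    using W1_nu_kap_eq_principal_ratio Cons.IH Cons.prems by (simp add: m_def kap_def)
  also have "\<dots> = principal_value q p t a b (x # xs)"
    by (rule principal_value_Cons[symmetric])
  finally show ?case
    by (simp add: nu_def)
qed

end

theorem mainTheorem12:
  fixes lam :: "nat list" and q p t a b :: complex
  assumes "sorted_wrt (\<ge>) lam"
    and "norm p < 1"
    and "generic_params q p t a b"
  shows "(let n = length lam; L = part lam; P = epoch q p; ii = int in
     Wm q p t lam (replicate n 0) (map (\<lambda>i. q powi L i * t powi (ii n - ii i)) [1..<n+1]) a b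
   = (\<Prod>k\<in>{1..n}.
        (P (q * b * t powi (ii n - ii k)) (L k) * P (q * t powi (ii n - ii k)) (L k)
         * P (a * t powi (2 * ii n - 2 * ii k)) (2 * L k))
        / (P ((a / b) * t powi (ii n - ii k)) (L k) * P (a * t powi (ii n - ii k)) (L k)
           * P (q * b * t powi (ii n + 1 - 2 * ii k)) (2 * L k))
        * t powi ((ii n + 1 - 2 * ii k) * L k))
     * (a / (q * b)) ^ sum_list lam
     * (\<Prod>i\<in>{1..n}. \<Prod>j\<in>{i+1..n}.
        (P (q * t powi (ii j - ii i - 1)) (L i - L j) * P (a * t powi (2 * ii n - ii i - ii j)) (L i + L j))
        / (P (q * t powi (ii j - ii i)) (L i - L j) * P (a * t powi (1 + 2 * ii n - ii i - ii j)) (L i + L j))))"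
proof -
  interpret generic_elliptic q p t a b
    using assms(2,3) by unfold_locales
  have "Wm q p t lam (replicate (length lam) 0) (spectral_vector q t lam) a b = principal_value q p t a b lam"
    using Wm_spectral_vector_eq_principal_value[OF assms(1), of "length lam"] by simp
  then show ?thesis
    unfolding spectral_vector_conv_map principal_value_def diag_factor_def pair_factor_def Let_def .
qed

end
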